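(* Let $R,T,N,\sigma$ be real numbers with $T\ge3$, $R,N\ge1$, $\sigma\ge\frac12$, let $j$ be a positive integer, and let $(a_n)$ be any sequence of complex numbers. Then for every $\varepsilon>0$, $$\sum_{q\le R}\ \sum_{\substack{\chi\bmod qj\\ \chi\ne\chi_0}}\Bigg(\int_{-T}^{T}\Bigg|\sum_{n\le N}\frac{a_n\chi(n)}{n^{\sigma+it}}\Bigg|\,dt\Bigg)^2\ll_\varepsilon(jRNT)^\varepsilon\,(RNT+jR^2T^2)\sum_{n\le N}\frac{|a_n|^2}{n^{2\sigma}},$$ where the inner sum is over all non-principal Dirichlet characters $\chi$ modulo $qj$, and the implied constant depends only on $\varepsilon$. *)

theory Defs
  imports "HOL-Analysis.Analysis"
begin

definition dirichlet_char :: "nat \<Rightarrow> (nat \<Rightarrow> complex) \<Rightarrow> bool" where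
  "dirichlet_char q chi \<longleftrightarrow> q \<ge> 1 \<and>
     (\<forall>m n. chi (m * n) = chi m * chi n) \<and>
     (\<forall>n. chi (n + q) = chi n) \<and>
     (\<forall>n. chi n \<noteq> 0 \<longleftrightarrow> coprime n q)"

definition principal_char :: "nat \<Rightarrow> nat \<Rightarrow> complex" where
  "principal_char q n = (if coprime n q then 1 else 0)"

end

theory Submission
  imports Defs "HOL-Number_Theory.Number_Theory"
begin

(*
  Fix a modulus m and write the Dirichlet polynomial as sum_n chi(n) c_n n^(-it) with
  c_n = a_n n^(-sigma). Cauchy-Schwarz bounds the square of its L^1 norm on [-T,T] by 2T times
  its L^2 norm. Grouping n by its residue r mod m writes the polynomial as sum_r chi(r) V_r(t),
  and orthogonality of the characters (Bessel's inequality) bounds sum_chi |sum_r chi(r) V_r(t)|^2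
  by m sum_r |V_r(t)|^2. Within one residue class the frequencies log n are spaced at least
  m |k - k'| / M apart, so a Hilbert-type mean value estimate gives
  int |V_r|^2 <= (2T + 4 M H_M / m) sum |c_n|^2 with H_M the harmonic number. Hence each modulus
  contributes at most 2T (2T m + 4 M H_M) sum |a_n|^2 n^(-2 sigma); summing over m = q j with
  q <= R and using H_N <= (1 + 1/eps) (j R N T)^eps gives the theorem with C = 8 (1 + 1/eps).
*)

section \<open>Dirichlet characters\<close>

lemma dirichlet_char_mult:
  assumes "dirichlet_char m chi" shows "chi (a * b) = chi a * chi b"
  using assms unfolding dirichlet_char_def by blast

lemma dirichlet_char_eq_0_iff:
  assumes "dirichlet_char m chi" shows "chi n = 0 \<longleftrightarrow> \<not> coprime n m"
  using assms unfolding dirichlet_char_def by blast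

lemma dirichlet_char_one:
  assumes "dirichlet_char m chi" shows "chi 1 = 1"
proof -
  have "chi 1 \<noteq> 0" using dirichlet_char_eq_0_iff[OF assms] by simp
  moreover have "chi 1 = chi 1 * chi 1" using dirichlet_char_mult[OF assms, of 1 1] by simp
  ultimately show ?thesis by simp
qed

lemma dirichlet_char_mod:
  assumes "dirichlet_char m chi" shows "chi (n mod m) = chi n"
proof -
  have "chi (r + k * m) = chi r" for r k
  proof (induction k)
    case (Suc k)
    have "r + Suc k * m = (r + k * m) + m" by simp
    then show ?case using Suc.IH assms unfolding dirichlet_char_def by presburger
  qed simp
  from this[of "n mod m" "n div m"] show ?thesis by simp
qed

lemma dirichlet_char_power_totient:
  assumes chi: "dirichlet_char m chi" and "coprime r m" shows "chi r ^ totient m = 1"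
proof -
  have "[r ^ totient m = 1] (mod m)" using euler_theorem assms(2) by blast
  then have "chi (r ^ totient m) = chi 1"
    unfolding cong_def by (metis dirichlet_char_mod[OF chi])
  moreover have "chi (r ^ k) = chi r ^ k" for k
    by (induction k)
      (simp_all add: dirichlet_char_one[OF chi, unfolded One_nat_def] dirichlet_char_mult[OF chi])
  ultimately show ?thesis using dirichlet_char_one[OF chi] by metis
qed

lemma norm_dirichlet_char:
  assumes chi: "dirichlet_char m chi" and "coprime r m" shows "norm (chi r) = 1"
proof -
  have "m \<ge> 1" using chi by (simp add: dirichlet_char_def)
  then have "totient m > 0" by simp
  moreover have "norm (chi r) ^ totient m = 1"
    by (metis dirichlet_char_power_totient[OF assms] norm_one norm_power)
  ultimately show ?thesis using power_eq_imp_eq_base[of "norm (chi r)" "totient m" 1] by simp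
qed

lemma finite_dirichlet_chars: "finite {chi. dirichlet_char m chi}"
proof (cases "m = 0")
  case True
  then show ?thesis by (simp add: dirichlet_char_def)
next
  case False
  define U where "U = insert 0 {z :: complex. z ^ totient m = 1}"
  have "finite U" unfolding U_def using False by (simp add: finite_roots_unity Suc_leI)
  have inj: "inj_on (\<lambda>chi. restrict chi {..<m}) {chi. dirichlet_char m chi}"
  proof (rule inj_onI, rule ext)
    fix chi psi n
    assume "chi \<in> {chi. dirichlet_char m chi}" "psi \<in> {chi. dirichlet_char m chi}"
      and eq: "restrict chi {..<m} = restrict psi {..<m}"
    then have "dirichlet_char m chi" "dirichlet_char m psi" by auto
    moreover have "chi (n mod m) = psi (n mod m)"
      using fun_cong[OF eq, of "n mod m"] False by simp
    ultimately show "chi n = psi n" by (simp add: dirichlet_char_mod)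
  qed
  have "(\<lambda>chi. restrict chi {..<m}) ` {chi. dirichlet_char m chi} \<subseteq> {..<m} \<rightarrow>\<^sub>E U"
  proof (clarsimp simp only: restrict_PiE_iff)
    fix chi r assume chi: "dirichlet_char m chi"
    show "chi r \<in> U"
      using dirichlet_char_power_totient[OF chi, of r] dirichlet_char_eq_0_iff[OF chi, of r]
      unfolding U_def by blast
  qed
  from inj_on_finite[OF inj this finite_PiE[OF finite_lessThan]] \<open>finite U\<close> show ?thesis by blast
qed

lemma bij_betw_mult_mod_lessThan:
  fixes a m :: nat
  assumes "coprime a m" "m \<ge> 1"
  shows "bij_betw (\<lambda>r. (a * r) mod m) {..<m} {..<m}"
proof -
  have "inj_on (\<lambda>r. (a * r) mod m) {..<m}"
  proof (rule inj_onI)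
    fix x y assume "x \<in> {..<m}" "y \<in> {..<m}" "(a * x) mod m = (a * y) mod m"
    then show "x = y" using cong_mult_lcancel_nat[OF \<open>coprime a m\<close>] by (simp add: cong_def)
  qed
  moreover have "(\<lambda>r. (a * r) mod m) ` {..<m} \<subseteq> {..<m}" using \<open>m \<ge> 1\<close> by auto
  ultimately show ?thesis by (simp add: bij_betw_def endo_inj_surj)
qed

lemma sum_dirichlet_char_mult_cnj_eq_0:
  assumes chi: "dirichlet_char m chi" and psi: "dirichlet_char m psi" and "chi \<noteq> psi"
  shows "(\<Sum>r<m. chi r * cnj (psi r)) = 0"
proof -
  have "m \<ge> 1" using chi by (simp add: dirichlet_char_def)
  obtain n where "chi n \<noteq> psi n" using \<open>chi \<noteq> psi\<close> by auto
  define a where "a = n mod m"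
  have a: "chi a \<noteq> psi a"
    unfolding a_def using \<open>chi n \<noteq> psi n\<close>
    by (simp add: dirichlet_char_mod[OF chi] dirichlet_char_mod[OF psi])
  have "coprime a m"
    using a dirichlet_char_eq_0_iff[OF chi, of a] dirichlet_char_eq_0_iff[OF psi, of a] by auto
  define S where "S = (\<Sum>r<m. chi r * cnj (psi r))"
  have bij: "bij_betw (\<lambda>r. (a * r) mod m) {..<m} {..<m}"
    using \<open>coprime a m\<close> \<open>m \<ge> 1\<close> by (rule bij_betw_mult_mod_lessThan)
  \<comment> \<open>Substituting \<open>r \<mapsto> a r\<close> multiplies the sum by \<open>chi a * cnj (psi a) \<noteq> 1\<close>.\<close>
  have "S = (\<Sum>r<m. chi ((a * r) mod m) * cnj (psi ((a * r) mod m)))"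
    unfolding S_def using sum.reindex_bij_betw[OF bij, of "\<lambda>r. chi r * cnj (psi r)"] by simp
  also have "\<dots> = chi a * cnj (psi a) * S"
    unfolding S_def sum_distrib_left
    by (simp add: dirichlet_char_mod[OF chi] dirichlet_char_mod[OF psi]
        dirichlet_char_mult[OF chi] dirichlet_char_mult[OF psi] mult_ac)
  finally have "(1 - chi a * cnj (psi a)) * S = 0" by (simp add: algebra_simps)
  moreover have "chi a * cnj (psi a) \<noteq> 1"
  proof
    have "psi a * cnj (psi a) = 1"
      using norm_dirichlet_char[OF psi \<open>coprime a m\<close>] by (simp add: complex_norm_square [symmetric])
    moreover assume "chi a * cnj (psi a) = 1"
    ultimately have "chi a * cnj (psi a) = psi a * cnj (psi a)" by simp
    moreover have "cnj (psi a) \<noteq> 0" using \<open>psi a * cnj (psi a) = 1\<close> by auto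
    ultimately show False using a by simp
  qed
  ultimately show ?thesis unfolding S_def by simp
qed

lemma dirichlet_char_orthogonality:
  assumes chi: "dirichlet_char m chi" and psi: "dirichlet_char m psi"
  shows "(\<Sum>r<m. chi r * cnj (psi r)) =
    (if chi = psi then of_nat (card {r\<in>{..<m}. coprime r m}) else 0)"
proof (cases "chi = psi")
  case True
  have "chi r * cnj (chi r) = (if coprime r m then 1 else 0)" for r
    using norm_dirichlet_char[OF chi, of r] dirichlet_char_eq_0_iff[OF chi, of r]
    by (auto simp: complex_norm_square [symmetric])
  then show ?thesis using True by (simp add: sum.If_cases Int_def)
qed (simp add: sum_dirichlet_char_mult_cnj_eq_0 chi psi)

lemma bessel_inequality_orthogonal:
  fixes e :: "'a \<Rightarrow> 'b \<Rightarrow> complex" and v :: "'b \<Rightarrow> complex"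
  assumes "finite X" and "c > 0"
    and orth: "\<And>i j. i \<in> X \<Longrightarrow> j \<in> X \<Longrightarrow>
      (\<Sum>r\<in>R. e i r * cnj (e j r)) = (if i = j then of_real c else 0)"
  shows "(\<Sum>i\<in>X. (norm (\<Sum>r\<in>R. e i r * v r))^2) \<le> c * (\<Sum>r\<in>R. (norm (v r))^2)"
proof -
  define a where "a i = (\<Sum>r\<in>R. e i r * v r)" for i
  define w where "w r = (\<Sum>i\<in>X. cnj (a i) * e i r)" for r
  define A where "A = (\<Sum>i\<in>X. (norm (a i))^2)"
  define V where "V = (\<Sum>r\<in>R. (norm (v r))^2)"
  have sq: "complex_of_real ((norm z)^2) = z * cnj z" for z by (rule complex_norm_square)
  have A_eq: "complex_of_real A = (\<Sum>i\<in>X. a i * cnj (a i))"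
    unfolding A_def of_real_sum sq ..
  have "(\<Sum>r\<in>R. v r * w r) = (\<Sum>i\<in>X. cnj (a i) * (\<Sum>r\<in>R. e i r * v r))"
    unfolding w_def sum_distrib_left by (subst sum.swap) (simp add: mult_ac)
  also have "\<dots> = of_real A"
    unfolding A_eq a_def [symmetric] by (simp add: mult.commute)
  finally have vw: "(\<Sum>r\<in>R. v r * w r) = of_real A" .
  have "w r * cnj (w r) = (\<Sum>i\<in>X. \<Sum>j\<in>X. cnj (a i) * a j * (e i r * cnj (e j r)))" for r
    unfolding w_def cnj_sum sum_product by (simp add: mult_ac)
  then have "complex_of_real (\<Sum>r\<in>R. (norm (w r))^2) = (\<Sum>i\<in>X. \<Sum>j\<in>X.
      cnj (a i) * a j * (\<Sum>r\<in>R. e i r * cnj (e j r)))"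
    unfolding of_real_sum sq by (simp add: sum_distrib_left sum.swap[of _ R])
  also have "\<dots> = of_real (c * A)"
    using \<open>finite X\<close>
    by (simp add: orth if_distrib sum.delta A_eq sum_distrib_left mult_ac cong: if_cong)
  finally have ww: "(\<Sum>r\<in>R. (norm (w r))^2) = c * A" using of_real_eq_iff by blast
  \<comment> \<open>Expand the nonnegative quantity \<open>\<Sum>r. |c v r - cnj (w r)|^2 = c^2 V - c A\<close>.\<close>
  have "0 \<le> (\<Sum>r\<in>R. (norm (of_real c * v r - cnj (w r)))^2)" by (simp add: sum_nonneg)
  also have "\<dots> = (\<Sum>r\<in>R. c^2 * (norm (v r))^2 - 2 * c * Re (v r * w r) + (norm (w r))^2)"
    by (intro sum.cong refl) (simp only: cmod_power2, simp add: power2_eq_square algebra_simps)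
  also have "\<dots> = c^2 * V - c * A"
  proof -
    have "(\<Sum>r\<in>R. Re (v r * w r)) = A" unfolding Re_sum [symmetric] vw by simp
    then show ?thesis using ww unfolding V_def
      by (simp add: sum.distrib sum_subtractf sum_distrib_left [symmetric] del: times_complex.sel)
  qed
  finally have "c * A \<le> c * (c * V)" by (simp add: power2_eq_square)
  then show ?thesis using \<open>c > 0\<close> unfolding A_def V_def a_def by simp
qed

lemma card_coprime_residues_bounds:
  assumes "m \<ge> 1" shows "1 \<le> card {r\<in>{..<m}. coprime r m}" "card {r\<in>{..<m}. coprime r m} \<le> m"
proof -
  have "card {r\<in>{..<m}. coprime r m} \<le> card {..<m}" by (rule card_mono) auto
  then show "card {r\<in>{..<m}. coprime r m} \<le> m" by simp
  have "(if m = 1 then 0 else 1) \<in> {r\<in>{..<m}. coprime r m}" using assms by auto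
  then have "{r\<in>{..<m}. coprime r m} \<noteq> {}" by blast
  then show "1 \<le> card {r\<in>{..<m}. coprime r m}" by (simp add: Suc_le_eq card_gt_0_iff)
qed

lemma sum_dirichlet_chars_norm_sq_le:
  assumes X: "X \<subseteq> {chi. dirichlet_char m chi}"
  shows "(\<Sum>chi\<in>X. (norm (\<Sum>r<m. chi r * v r))^2) \<le> real m * (\<Sum>r<m. (norm (v r))^2)"
proof (cases "m = 0")
  case False
  define c where "c = card {r\<in>{..<m}. coprime r m}"
  have "c \<ge> 1" "c \<le> m" using card_coprime_residues_bounds False unfolding c_def by auto
  have "finite X" using X finite_dirichlet_chars finite_subset by blast
  have "(\<Sum>chi\<in>X. (norm (\<Sum>r<m. chi r * v r))^2) \<le> real c * (\<Sum>r<m. (norm (v r))^2)"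
    using X \<open>c \<ge> 1\<close> by (intro bessel_inequality_orthogonal \<open>finite X\<close>)
      (auto simp: dirichlet_char_orthogonality c_def subset_iff)
  also have "\<dots> \<le> real m * (\<Sum>r<m. (norm (v r))^2)"
    using \<open>c \<le> m\<close> by (intro mult_right_mono sum_nonneg) auto
  finally show ?thesis .
qed (use X in \<open>auto simp: dirichlet_char_def\<close>)

lemma sum_dirichlet_char_by_residue:
  assumes chi: "dirichlet_char m chi" and "finite S"
  shows "(\<Sum>n\<in>S. chi n * f n) = (\<Sum>r<m. chi r * (\<Sum>n\<in>{n\<in>S. n mod m = r}. f n))"
proof -
  have "m > 0" using chi by (simp add: dirichlet_char_def)
  then have "(\<lambda>n. n mod m) ` S \<subseteq> {..<m}" by auto
  then have "(\<Sum>n\<in>S. chi n * f n) = (\<Sum>r<m. \<Sum>n\<in>{n\<in>S. n mod m = r}. chi n * f n)"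
    by (rule sum.group[OF \<open>finite S\<close> finite_lessThan, symmetric])
  also have "\<dots> = (\<Sum>r<m. chi r * (\<Sum>n\<in>{n\<in>S. n mod m = r}. f n))"
    unfolding sum_distrib_left
    by (intro sum.cong refl) (metis (mono_tags) dirichlet_char_mod[OF chi] mem_Collect_eq)
  finally show ?thesis .
qed

lemma sum_dirichlet_chars_norm_sq_le_residues:
  assumes X: "X \<subseteq> {chi. dirichlet_char m chi}" and "finite S"
  shows "(\<Sum>chi\<in>X. (norm (\<Sum>n\<in>S. chi n * f n))^2)
    \<le> real m * (\<Sum>r<m. (norm (\<Sum>n\<in>{n\<in>S. n mod m = r}. f n))^2)"
proof -
  have "(\<Sum>n\<in>S. chi n * f n) = (\<Sum>r<m. chi r * (\<Sum>n\<in>{n\<in>S. n mod m = r}. f n))"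
    if "chi \<in> X" for chi
    using X that \<open>finite S\<close> by (intro sum_dirichlet_char_by_residue) auto
  then have "(\<Sum>chi\<in>X. (norm (\<Sum>n\<in>S. chi n * f n))^2) =
      (\<Sum>chi\<in>X. (norm (\<Sum>r<m. chi r * (\<Sum>n\<in>{n\<in>S. n mod m = r}. f n)))^2)"
    by simp
  also have "\<dots> \<le> real m * (\<Sum>r<m. (norm (\<Sum>n\<in>{n\<in>S. n mod m = r}. f n))^2)"
    using X by (rule sum_dirichlet_chars_norm_sq_le)
  finally show ?thesis .
qed

section \<open>Mean values of Dirichlet polynomials\<close>

lemma has_integral_cos_symmetric:
  fixes l T :: real assumes "l \<noteq> 0" "T \<ge> 0"
  shows "((\<lambda>t. cos (t * l)) has_integral 2 * sin (T * l) / l) {-T..T}"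
proof -
  have "((\<lambda>t. sin (t * l) / l) has_vector_derivative cos (t * l)) (at t within {-T..T})" for t
    using \<open>l \<noteq> 0\<close> unfolding has_real_derivative_iff_has_vector_derivative [symmetric]
    by (auto intro!: derivative_eq_intros)
  then have "((\<lambda>t. cos (t * l)) has_integral sin (T * l) / l - sin (- T * l) / l) {-T..T}"
    using \<open>T \<ge> 0\<close> by (intro fundamental_theorem_of_calculus) auto
  then show ?thesis by simp
qed

lemma has_integral_sin_symmetric:
  fixes l T :: real assumes "T \<ge> 0"
  shows "((\<lambda>t. sin (t * l)) has_integral 0) {-T..T}"
proof (cases "l = 0")
  case False
  have "((\<lambda>t. - cos (t * l) / l) has_vector_derivative sin (t * l)) (at t within {-T..T})" for t
    using False unfolding has_real_derivative_iff_has_vector_derivative [symmetric]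
    by (auto intro!: derivative_eq_intros)
  then have "((\<lambda>t. sin (t * l)) has_integral - cos (T * l) / l - - cos (- T * l) / l) {-T..T}"
    using \<open>T \<ge> 0\<close> by (intro fundamental_theorem_of_calculus) auto
  then show ?thesis by simp
qed simp

lemma abs_integral_cos_symmetric_le:
  fixes l T :: real assumes "l \<noteq> 0" "T \<ge> 0"
  shows "\<bar>integral {-T..T} (\<lambda>t. cos (t * l))\<bar> \<le> 2 / \<bar>l\<bar>"
  using integral_unique[OF has_integral_cos_symmetric[OF assms]]
  by (simp add: abs_mult abs_sin_le_one divide_right_mono)

lemma norm_sum_cis_sq:
  fixes c :: "'a \<Rightarrow> complex" and \<omega> :: "'a \<Rightarrow> real"
  shows "(norm (\<Sum>n\<in>A. c n * cis (t * \<omega> n)))^2 = (\<Sum>n\<in>A. \<Sum>n'\<in>A.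
    Re (c n * cnj (c n')) * cos (t * (\<omega> n - \<omega> n')) - Im (c n * cnj (c n')) * sin (t * (\<omega> n - \<omega> n')))"
proof -
  define z where "z = (\<Sum>n\<in>A. c n * cis (t * \<omega> n))"
  have "z * cnj z = (\<Sum>n\<in>A. \<Sum>n'\<in>A. c n * cnj (c n') * cis (t * (\<omega> n - \<omega> n')))"
    unfolding z_def cnj_sum sum_product
    by (intro sum.cong refl) (simp add: cis_cnj cis_mult right_diff_distrib mult_ac)
  then have "Re (z * cnj z) = (\<Sum>n\<in>A. \<Sum>n'\<in>A. Re (c n * cnj (c n') * cis (t * (\<omega> n - \<omega> n'))))"
    by (simp add: Re_sum del: times_complex.sel)
  moreover have "Re (z * cnj z) = (norm z)^2"
    by (simp flip: complex_norm_square)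
  ultimately show ?thesis unfolding z_def by simp
qed

lemma integral_norm_sum_cis_sq:
  fixes c :: "'a \<Rightarrow> complex" and \<omega> :: "'a \<Rightarrow> real"
  assumes "finite A" "T \<ge> 0"
  shows "integral {-T..T} (\<lambda>t. (norm (\<Sum>n\<in>A. c n * cis (t * \<omega> n)))^2) = (\<Sum>n\<in>A. \<Sum>n'\<in>A.
    Re (c n * cnj (c n')) * integral {-T..T} (\<lambda>t. cos (t * (\<omega> n - \<omega> n'))))"
proof -
  have "((\<lambda>t. \<Sum>n\<in>A. \<Sum>n'\<in>A. Re (c n * cnj (c n')) * cos (t * (\<omega> n - \<omega> n'))
      - Im (c n * cnj (c n')) * sin (t * (\<omega> n - \<omega> n'))) has_integral
    (\<Sum>n\<in>A. \<Sum>n'\<in>A. Re (c n * cnj (c n')) * integral {-T..T} (\<lambda>t. cos (t * (\<omega> n - \<omega> n')))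
      - Im (c n * cnj (c n')) * 0)) {-T..T}"
    using assms
    by (intro has_integral_sum has_integral_diff has_integral_mult_right has_integral_sin_symmetric
        integrable_integral integrable_continuous_interval continuous_intros)
  then show ?thesis unfolding norm_sum_cis_sq by (simp add: integral_unique)
qed

lemma off_diagonal_term_le:
  fixes z z' :: complex and \<omega> \<omega>' T :: real
  assumes "\<omega> \<noteq> \<omega>'" "T \<ge> 0"
  shows "Re (z * cnj z') * integral {-T..T} (\<lambda>t. cos (t * (\<omega> - \<omega>')))
    \<le> ((norm z)^2 + (norm z')^2) / \<bar>\<omega> - \<omega>'\<bar>"
proof -
  have "Re (z * cnj z') * integral {-T..T} (\<lambda>t. cos (t * (\<omega> - \<omega>')))
      \<le> \<bar>Re (z * cnj z')\<bar> * \<bar>integral {-T..T} (\<lambda>t. cos (t * (\<omega> - \<omega>')))\<bar>"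
    by (metis abs_ge_self abs_mult)
  also have "\<dots> \<le> (norm z * norm z') * (2 / \<bar>\<omega> - \<omega>'\<bar>)"
    using abs_Re_le_cmod[of "z * cnj z'"] abs_integral_cos_symmetric_le[of "\<omega> - \<omega>'" T] assms
    by (intro mult_mono) (auto simp: norm_mult)
  also have "\<dots> \<le> ((norm z)^2 + (norm z')^2) / \<bar>\<omega> - \<omega>'\<bar>"
    using sum_squares_bound[of "norm z" "norm z'"] by (simp add: divide_right_mono)
  finally show ?thesis .
qed

lemma sum_off_diagonal_swap:
  fixes f :: "'a \<Rightarrow> real" and W :: "'a \<Rightarrow> 'a \<Rightarrow> real"
  assumes "finite A" and W_sym: "\<And>n n'. W n n' = W n' n"
  shows "(\<Sum>n\<in>A. \<Sum>n'\<in>A - {n}. f n' * W n n') = (\<Sum>n\<in>A. \<Sum>n'\<in>A - {n}. f n * W n n')"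
proof -
  have "{n'. n' \<in> A \<and> n \<noteq> n'} = A - {n}" "{n'. n' \<in> A \<and> n' \<noteq> n} = A - {n}" for n
    by auto
  then have "(\<Sum>n\<in>A. \<Sum>n'\<in>A - {n}. f n' * W n n') = (\<Sum>n'\<in>A. \<Sum>n\<in>A - {n'}. f n' * W n n')"
    using sum.swap_restrict[OF \<open>finite A\<close> \<open>finite A\<close>, of "\<lambda>n n'. f n' * W n n'" "\<lambda>n n'. n \<noteq> n'"]
    by simp
  also have "\<dots> = (\<Sum>n\<in>A. \<Sum>n'\<in>A - {n}. f n * W n n')"
    by (intro sum.cong refl arg_cong2[where f = "(*)"] W_sym)
  finally show ?thesis .
qed

lemma mean_value_spaced_frequencies:
  fixes c :: "'a \<Rightarrow> complex" and \<omega> :: "'a \<Rightarrow> real"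
  assumes "finite A" "T \<ge> 0" "inj_on \<omega> A"
    and spacing: "\<And>n. n \<in> A \<Longrightarrow> (\<Sum>n'\<in>A - {n}. 1 / \<bar>\<omega> n - \<omega> n'\<bar>) \<le> B"
  shows "integral {-T..T} (\<lambda>t. (norm (\<Sum>n\<in>A. c n * cis (t * \<omega> n)))^2)
    \<le> (2 * T + 2 * B) * (\<Sum>n\<in>A. (norm (c n))^2)"
proof -
  define I where "I n n' = integral {-T..T} (\<lambda>t. cos (t * (\<omega> n - \<omega> n')))" for n n'
  define W where "W n n' = 1 / \<bar>\<omega> n - \<omega> n'\<bar>" for n n'
  have row: "(\<Sum>n'\<in>A. Re (c n * cnj (c n')) * I n n') \<le>
      2 * T * (norm (c n))^2 + (\<Sum>n'\<in>A - {n}. ((norm (c n))^2 + (norm (c n'))^2) * W n n')"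
    if "n \<in> A" for n
  proof -
    have "Re (c n * cnj (c n)) = (norm (c n))^2" by (simp flip: complex_norm_square)
    moreover have "I n n = 2 * T" using \<open>T \<ge> 0\<close> by (simp add: I_def)
    ultimately have diag: "Re (c n * cnj (c n)) * I n n = 2 * T * (norm (c n))^2" by simp
    have off_diag: "Re (c n * cnj (c n')) * I n n' \<le> ((norm (c n))^2 + (norm (c n'))^2) * W n n'"
      if "n' \<in> A - {n}" for n'
    proof -
      have "\<omega> n \<noteq> \<omega> n'" using \<open>inj_on \<omega> A\<close> \<open>n \<in> A\<close> that by (auto dest: inj_onD)
      from off_diagonal_term_le[OF this \<open>T \<ge> 0\<close>, of "c n" "c n'"] show ?thesis
        unfolding I_def W_def by simp
    qed
    show ?thesis
      unfolding sum.remove[OF \<open>finite A\<close> that] diag by (intro add_left_mono sum_mono off_diag)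
  qed
  have "integral {-T..T} (\<lambda>t. (norm (\<Sum>n\<in>A. c n * cis (t * \<omega> n)))^2) =
      (\<Sum>n\<in>A. \<Sum>n'\<in>A. Re (c n * cnj (c n')) * I n n')"
    unfolding I_def using \<open>finite A\<close> \<open>T \<ge> 0\<close> by (rule integral_norm_sum_cis_sq)
  also have "\<dots> \<le> (\<Sum>n\<in>A. 2 * T * (norm (c n))^2 +
      (\<Sum>n'\<in>A - {n}. ((norm (c n))^2 + (norm (c n'))^2) * W n n'))"
    by (intro sum_mono row)
  also have "\<dots> = 2 * T * (\<Sum>n\<in>A. (norm (c n))^2) +
      (\<Sum>n\<in>A. \<Sum>n'\<in>A - {n}. (norm (c n))^2 * W n n') +
      (\<Sum>n\<in>A. \<Sum>n'\<in>A - {n}. (norm (c n'))^2 * W n n')"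
    by (simp add: sum.distrib distrib_right sum_distrib_left)
  also have "\<dots> = 2 * T * (\<Sum>n\<in>A. (norm (c n))^2) +
      2 * (\<Sum>n\<in>A. (norm (c n))^2 * (\<Sum>n'\<in>A - {n}. W n n'))"
    using sum_off_diagonal_swap[OF \<open>finite A\<close>, of W "\<lambda>n. (norm (c n))^2"]
    by (simp add: W_def abs_minus_commute sum_distrib_left)
  also have "\<dots> \<le> 2 * T * (\<Sum>n\<in>A. (norm (c n))^2) + 2 * (\<Sum>n\<in>A. (norm (c n))^2 * B)"
    using spacing unfolding W_def by (intro add_left_mono mult_left_mono sum_mono) auto
  also have "\<dots> = (2 * T + 2 * B) * (\<Sum>n\<in>A. (norm (c n))^2)"
    by (simp add: algebra_simps sum_distrib_left sum_distrib_right)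
  finally show ?thesis .
qed

lemma abs_diff_le_mult_abs_ln_diff:
  fixes x y M :: real assumes "0 < x" "0 < y" "x \<le> M" "y \<le> M"
  shows "\<bar>x - y\<bar> \<le> M * \<bar>ln x - ln y\<bar>"
proof -
  have le: "b - a \<le> M * (ln b - ln a)" if "0 < a" "a \<le> b" "b \<le> M" for a b :: real
  proof -
    have "ln (a / b) \<le> a / b - 1" using that by (intro ln_le_minus_one) auto
    then have "b - a \<le> b * (ln b - ln a)" using that by (simp add: ln_div field_simps)
    also have "\<dots> \<le> M * (ln b - ln a)" using that by (intro mult_right_mono) auto
    finally show ?thesis .
  qed
  show ?thesis
    using le[of x y] le[of y x] assms by (cases "x \<le> y") (auto simp: abs_if)
qed

lemma sum_inverse_multiples_le_harm:
  assumes "D \<subseteq> {1..M}" "\<And>d. d \<in> D \<Longrightarrow> m dvd d" "m > 0"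
  shows "(\<Sum>d\<in>D. 1 / real d) \<le> harm M / real m"
proof -
  define E where "E = {e\<in>{1..M}. m * e \<in> D}"
  have "D = (\<lambda>e. m * e) ` E"
  proof (intro equalityI subsetI)
    fix d assume "d \<in> D"
    obtain e where d: "d = m * e" using assms(2)[OF \<open>d \<in> D\<close>] by blast
    have "1 \<le> d" "d \<le> M" using \<open>d \<in> D\<close> assms(1) by auto
    moreover have "e \<le> m * e" using \<open>m > 0\<close> by simp
    ultimately have "e \<le> M" "e \<noteq> 0" using d by (linarith, metis mult_0_right not_one_le_zero)
    then have "e \<in> E" using \<open>d \<in> D\<close> d unfolding E_def by auto
    with d show "d \<in> (\<lambda>e. m * e) ` E" by blast
  qed (auto simp: E_def)
  moreover have "inj_on (\<lambda>e. m * e) E" using \<open>m > 0\<close> by (auto intro: inj_onI)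
  ultimately have "(\<Sum>d\<in>D. 1 / real d) = (\<Sum>e\<in>E. 1 / real m * (1 / real e))"
    by (simp add: sum.reindex)
  also have "\<dots> \<le> (\<Sum>e\<in>{1..M}. 1 / real m * (1 / real e))"
    by (intro sum_mono2) (auto simp: E_def)
  also have "\<dots> = harm M / real m"
    by (simp add: harm_def sum_distrib_left [symmetric] divide_inverse)
  finally show ?thesis .
qed

lemma sum_inverse_dist_congruent_le:
  fixes A :: "nat set"
  assumes A: "A \<subseteq> {1..M}" and cong: "\<And>n'. n' \<in> A \<Longrightarrow> [n' = n] (mod m)"
    and "n \<le> M" "m > 0"
  shows "(\<Sum>n'\<in>A - {n}. 1 / \<bar>real n' - real n\<bar>) \<le> 2 * harm M / real m"
proof -
  have "finite A" using A finite_subset by blast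
  have half: "(\<Sum>n'\<in>S. 1 / real (g n')) \<le> harm M / real m"
    if "inj_on g S" "g ` S \<subseteq> {1..M}" "\<And>n'. n' \<in> S \<Longrightarrow> m dvd g n'" for g S
    using sum_inverse_multiples_le_harm[OF that(2) _ \<open>m > 0\<close>] that(1,3)
    by (auto simp: sum.reindex)
  define L where "L = {n'\<in>A. n' < n}"
  define U where "U = {n'\<in>A. n < n'}"
  have "A - {n} = L \<union> U" "finite L" "finite U" "L \<inter> U = {}"
    using \<open>finite A\<close> unfolding L_def U_def by auto
  then have "(\<Sum>n'\<in>A - {n}. 1 / \<bar>real n' - real n\<bar>) =
      (\<Sum>n'\<in>L. 1 / \<bar>real n' - real n\<bar>) + (\<Sum>n'\<in>U. 1 / \<bar>real n' - real n\<bar>)"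
    by (simp add: sum.union_disjoint)
  also have "\<dots> = (\<Sum>n'\<in>L. 1 / real (n - n')) + (\<Sum>n'\<in>U. 1 / real (n' - n))"
    by (intro arg_cong2[where f = "(+)"] sum.cong) (auto simp: L_def U_def of_nat_diff)
  also have "\<dots> \<le> harm M / real m + harm M / real m"
  proof (intro add_mono half)
    show "m dvd n - n'" if "n' \<in> L" for n'
      using that cong[of n'] cong_altdef_nat[of n' n] by (auto simp: L_def cong_sym_eq)
    show "m dvd n' - n" if "n' \<in> U" for n'
      using that cong[of n'] cong_altdef_nat[of n n'] by (auto simp: U_def)
  qed (use \<open>n \<le> M\<close> in \<open>auto simp: L_def U_def inj_on_def dest!: subsetD[OF A]\<close>)
  finally show ?thesis by simp
qed

lemma mean_value_congruent_dirichlet_poly: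
  fixes c :: "nat \<Rightarrow> complex"
  assumes A: "A \<subseteq> {1..M}" and cong: "\<And>n n'. n \<in> A \<Longrightarrow> n' \<in> A \<Longrightarrow> [n' = n] (mod m)"
    and "m > 0" "T \<ge> 0"
  shows "integral {-T..T} (\<lambda>t. (norm (\<Sum>n\<in>A. c n * cis (t * - ln (real n))))^2)
    \<le> (2 * T + 4 * real M * harm M / real m) * (\<Sum>n\<in>A. (norm (c n))^2)"
proof -
  have "finite A" using A finite_subset by blast
  have "inj_on (\<lambda>n. - ln (real n)) A"
  proof (rule inj_onI)
    fix x y assume "x \<in> A" "y \<in> A" "- ln (real x) = - ln (real y)"
    moreover have "real x > 0" "real y > 0" using A \<open>x \<in> A\<close> \<open>y \<in> A\<close> by auto
    ultimately show "x = y" by simp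
  qed
  moreover have "(\<Sum>n'\<in>A - {n}. 1 / \<bar>- ln (real n) - - ln (real n')\<bar>) \<le> 2 * real M * harm M / real m"
    if "n \<in> A" for n
  proof -
    have "1 / \<bar>- ln (real n) - - ln (real n')\<bar> \<le> real M * (1 / \<bar>real n' - real n\<bar>)"
      if "n' \<in> A - {n}" for n'
    proof -
      have le: "\<bar>real n' - real n\<bar> \<le> real M * \<bar>ln (real n') - ln (real n)\<bar>"
        using A \<open>n \<in> A\<close> that by (intro abs_diff_le_mult_abs_ln_diff) auto
      have pos: "\<bar>real n' - real n\<bar> > 0" using that by auto
      with le have "\<bar>ln (real n') - ln (real n)\<bar> > 0"
        by (cases "ln (real n') = ln (real n)") auto
      with le pos show ?thesis by (simp add: field_simps abs_minus_commute)
    qed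
    then have "(\<Sum>n'\<in>A - {n}. 1 / \<bar>- ln (real n) - - ln (real n')\<bar>) \<le>
        real M * (\<Sum>n'\<in>A - {n}. 1 / \<bar>real n' - real n\<bar>)"
      unfolding sum_distrib_left by (intro sum_mono) simp
    also have "\<dots> \<le> real M * (2 * harm M / real m)"
      using A \<open>n \<in> A\<close> cong \<open>m > 0\<close>
      by (intro mult_left_mono sum_inverse_dist_congruent_le) auto
    finally show ?thesis by (simp add: mult_ac)
  qed
  ultimately have "integral {-T..T} (\<lambda>t. (norm (\<Sum>n\<in>A. c n * cis (t * - ln (real n))))^2)
      \<le> (2 * T + 2 * (2 * real M * harm M / real m)) * (\<Sum>n\<in>A. (norm (c n))^2)"
    by (intro mean_value_spaced_frequencies \<open>finite A\<close> \<open>T \<ge> 0\<close>)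
  then show ?thesis by (simp add: mult.assoc)
qed

section \<open>The hybrid large sieve for characters\<close>

lemma square_integral_le_integral_square:
  fixes g :: "real \<Rightarrow> real"
  assumes "continuous_on {a..b} g" "a < b"
  shows "(integral {a..b} g)^2 \<le> (b - a) * integral {a..b} (\<lambda>t. (g t)^2)"
proof -
  define I where "I = integral {a..b} g"
  define J where "J = integral {a..b} (\<lambda>t. (g t)^2)"
  define \<mu> where "\<mu> = I / (b - a)"
  have "(g has_integral I) {a..b}" "((\<lambda>t. (g t)^2) has_integral J) {a..b}"
    unfolding I_def J_def using assms(1)
    by (auto intro!: integrable_integral integrable_continuous_interval continuous_intros)
  moreover have "((\<lambda>t. \<mu>^2) has_integral (b - a) * \<mu>^2) {a..b}"
    using has_integral_const_real[of "\<mu>^2" a b] \<open>a < b\<close> by simp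
  ultimately have "((\<lambda>t. (g t)^2 - 2 * \<mu> * g t + \<mu>^2) has_integral J - 2 * \<mu> * I + (b - a) * \<mu>^2) {a..b}"
    by (intro has_integral_add has_integral_diff has_integral_mult_right)
  then have "0 \<le> J - 2 * \<mu> * I + (b - a) * \<mu>^2"
    by (rule has_integral_nonneg) (use zero_le_power2[of "g _ - \<mu>"] in \<open>simp add: power2_diff algebra_simps\<close>)
  also have "\<dots> = J - I^2 / (b - a)"
  proof -
    have "(b - a) * \<mu>^2 = \<mu> * I" "\<mu> * I = I^2 / (b - a)"
      unfolding \<mu>_def using \<open>a < b\<close> by (simp_all add: power2_eq_square)
    then show ?thesis by linarith
  qed
  finally show ?thesis
    using \<open>a < b\<close> unfolding I_def [symmetric] J_def [symmetric] by (simp add: field_simps)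
qed

lemma sum_chars_sq_integral_norm_le:
  fixes c :: "nat \<Rightarrow> complex"
  assumes X: "X \<subseteq> {chi. dirichlet_char m chi}" and "m > 0" "T > 0"
  shows "(\<Sum>chi\<in>X. (integral {-T..T} (\<lambda>t. norm (\<Sum>n\<in>{1..M}. chi n * (c n * cis (t * - ln (real n))))))^2)
    \<le> 2 * T * (2 * T * real m + 4 * real M * harm M) * (\<Sum>n\<in>{1..M}. (norm (c n))^2)"
proof -
  define P where "P chi t = (\<Sum>n\<in>{1..M}. chi n * (c n * cis (t * - ln (real n))))" for chi t
  define C where "C r = {n\<in>{1..M}. n mod m = r}" for r
  define V where "V r t = (\<Sum>n\<in>C r. c n * cis (t * - ln (real n)))" for r t
  have "finite X" using X finite_dirichlet_chars finite_subset by blast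
  have cont_P: "continuous_on {-T..T} (\<lambda>t. norm (P chi t))" for chi
    unfolding P_def by (intro continuous_intros)
  have int_P: "(\<lambda>t. (norm (P chi t))^2) integrable_on {-T..T}" for chi
    unfolding P_def by (intro integrable_continuous_interval continuous_intros)
  have int_V: "(\<lambda>t. (norm (V r t))^2) integrable_on {-T..T}" for r
    unfolding V_def by (intro integrable_continuous_interval continuous_intros)
  have int_V_sum: "(\<lambda>t. real m * (\<Sum>r<m. (norm (V r t))^2)) integrable_on {-T..T}"
    unfolding V_def by (intro integrable_continuous_interval continuous_intros)
  have pointwise: "(\<Sum>chi\<in>X. (norm (P chi t))^2) \<le> real m * (\<Sum>r<m. (norm (V r t))^2)" for t
    unfolding P_def V_def C_def using X by (rule sum_dirichlet_chars_norm_sq_le_residues) simp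
  have "(\<lambda>n. n mod m) ` {1..M} \<subseteq> {..<m}" using \<open>m > 0\<close> by auto
  then have regroup: "(\<Sum>r<m. \<Sum>n\<in>C r. (norm (c n))^2) = (\<Sum>n\<in>{1..M}. (norm (c n))^2)"
    unfolding C_def by (rule sum.group[OF finite_atLeastAtMost finite_lessThan])
  have "(\<Sum>chi\<in>X. (integral {-T..T} (\<lambda>t. norm (P chi t)))^2)
      \<le> (\<Sum>chi\<in>X. 2 * T * integral {-T..T} (\<lambda>t. (norm (P chi t))^2))"
    using square_integral_le_integral_square[OF cont_P] \<open>T > 0\<close> by (intro sum_mono) simp
  also have "\<dots> = 2 * T * integral {-T..T} (\<lambda>t. \<Sum>chi\<in>X. (norm (P chi t))^2)"
    using int_P by (simp add: sum_distrib_left Henstock_Kurzweil_Integration.integral_sum \<open>finite X\<close>)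
  also have "\<dots> \<le> 2 * T * integral {-T..T} (\<lambda>t. real m * (\<Sum>r<m. (norm (V r t))^2))"
    using \<open>T > 0\<close> int_P int_V_sum pointwise
    by (intro mult_left_mono integral_le integrable_sum \<open>finite X\<close>) auto
  also have "\<dots> = 2 * T * real m * (\<Sum>r<m. integral {-T..T} (\<lambda>t. (norm (V r t))^2))"
    using int_V by (simp add: Henstock_Kurzweil_Integration.integral_sum)
  also have "\<dots> \<le> 2 * T * real m * (\<Sum>r<m. (2 * T + 4 * real M * harm M / real m) *
      (\<Sum>n\<in>C r. (norm (c n))^2))"
    unfolding V_def using \<open>T > 0\<close> \<open>m > 0\<close>
    by (intro mult_left_mono sum_mono mean_value_congruent_dirichlet_poly) (auto simp: C_def cong_def)
  also have "\<dots> = 2 * T * (2 * T * real m + 4 * real M * harm M) * (\<Sum>n\<in>{1..M}. (norm (c n))^2)"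
    unfolding sum_distrib_left [symmetric] regroup using \<open>m > 0\<close> by (simp add: field_simps)
  finally show ?thesis unfolding P_def .
qed

lemma of_nat_powr_complex_eq_cis:
  assumes "n > 0"
  shows "of_nat n powr (complex_of_real \<sigma> + \<i> * complex_of_real t) =
    of_real (real n powr \<sigma>) * cis (t * ln (real n))"
proof -
  have "of_nat n powr (complex_of_real \<sigma> + \<i> * complex_of_real t) =
      exp (of_real (\<sigma> * ln (real n))) * exp (\<i> * of_real (t * ln (real n)))"
    using assms by (simp add: powr_def algebra_simps flip: exp_add)
  also have "\<dots> = of_real (real n powr \<sigma>) * cis (t * ln (real n))"
    using assms by (simp only: exp_of_real cis_conv_exp powr_def) simp
  finally show ?thesis .
qed

lemma sum_chars_sq_integral_dirichlet_poly_le: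
  fixes a :: "nat \<Rightarrow> complex"
  assumes "X \<subseteq> {chi. dirichlet_char m chi}" "m > 0" "T > 0"
  shows "(\<Sum>chi\<in>X. (integral {-T..T} (\<lambda>t. norm (\<Sum>n\<in>{1..M}.
      a n * chi n / of_nat n powr (complex_of_real \<sigma> + \<i> * complex_of_real t))))^2)
    \<le> 2 * T * (2 * T * real m + 4 * real M * harm M) *
      (\<Sum>n\<in>{1..M}. (norm (a n))^2 / real n powr (2 * \<sigma>))"
proof -
  define c where "c n = a n / of_real (real n powr \<sigma>)" for n
  have "a n * chi n / of_nat n powr (complex_of_real \<sigma> + \<i> * complex_of_real t) =
      chi n * (c n * cis (t * - ln (real n)))" if "n \<in> {1..M}" for n chi t
  proof -
    have "cis (t * - ln (real n)) = inverse (cis (t * ln (real n)))" by (simp add: cis_inverse)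
    then show ?thesis
      using that by (simp add: of_nat_powr_complex_eq_cis c_def divide_inverse mult_ac)
  qed
  moreover have "(norm (c n))^2 = (norm (a n))^2 / real n powr (2 * \<sigma>)" if "n \<in> {1..M}" for n
  proof -
    have "(real n powr \<sigma>)^2 = real n powr (2 * \<sigma>)"
      by (simp add: power2_eq_square powr_add [symmetric])
    then show ?thesis using that by (simp add: c_def norm_divide power_divide)
  qed
  ultimately show ?thesis
    using sum_chars_sq_integral_norm_le[OF assms, where M = M and c = c] by simp
qed

lemma harm_le_powr:
  fixes x \<epsilon> :: real assumes "\<epsilon> > 0" "real M \<le> x" "1 \<le> x"
  shows "harm M \<le> (1 + 1 / \<epsilon>) * x powr \<epsilon>"
proof -
  have "1 \<le> x powr \<epsilon>" using assms by (simp add: ge_one_powr_ge_zero)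
  have "\<epsilon> * ln x = ln (x powr \<epsilon>)" using assms by (simp add: ln_powr)
  also have "\<dots> \<le> x powr \<epsilon> - 1" using assms by (intro ln_le_minus_one) simp
  also have "\<dots> \<le> x powr \<epsilon>" by simp
  finally have ln_le: "ln x \<le> x powr \<epsilon> / \<epsilon>" using assms by (simp add: field_simps)
  have "harm M \<le> 1 + ln x"
  proof (cases "M = 0")
    case False
    then have "harm M - ln (real M) \<le> harm 1 - ln (real 1)"
      by (intro euler_mascheroni_sequence_decreasing) auto
    moreover have "ln (real M) \<le> ln x" using False assms by simp
    ultimately show ?thesis by (simp add: harm_def)
  qed (use assms in \<open>simp add: harm_def\<close>)
  also have "\<dots> \<le> (1 + 1 / \<epsilon>) * x powr \<epsilon>"
    using ln_le \<open>1 \<le> x powr \<epsilon>\<close> by (simp add: algebra_simps)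
  finally show ?thesis .
qed

lemma sum_moduli_chars_sq_integral_dirichlet_poly_le:
  fixes a :: "nat \<Rightarrow> complex"
  assumes "j > 0" "T > 0"
  shows "(\<Sum>q\<in>{1..Q}. \<Sum>chi\<in>{chi. dirichlet_char (q * j) chi \<and> chi \<noteq> principal_char (q * j)}.
      (integral {-T..T} (\<lambda>t. norm (\<Sum>n\<in>{1..M}.
        a n * chi n / of_nat n powr (complex_of_real \<sigma> + \<i> * complex_of_real t))))^2)
    \<le> real Q * (2 * T * (2 * T * real (Q * j) + 4 * real M * harm M)) *
      (\<Sum>n\<in>{1..M}. (norm (a n))^2 / real n powr (2 * \<sigma>))"
    (is "(\<Sum>q\<in>{1..Q}. ?F q) \<le> _")
proof -
  define S where "S = (\<Sum>n\<in>{1..M}. (norm (a n))^2 / real n powr (2 * \<sigma>))"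
  have "S \<ge> 0" unfolding S_def by (intro sum_nonneg) auto
  have "?F q \<le> 2 * T * (2 * T * real (Q * j) + 4 * real M * harm M) * S" if "q \<in> {1..Q}" for q
  proof -
    have "?F q \<le> 2 * T * (2 * T * real (q * j) + 4 * real M * harm M) * S"
      unfolding S_def using that assms by (intro sum_chars_sq_integral_dirichlet_poly_le) auto
    also have "\<dots> \<le> 2 * T * (2 * T * real (Q * j) + 4 * real M * harm M) * S"
      using that \<open>T > 0\<close> \<open>S \<ge> 0\<close>
      by (intro mult_right_mono mult_left_mono add_right_mono) (auto simp: mult_right_mono)
    finally show ?thesis .
  qed
  then have "(\<Sum>q\<in>{1..Q}. ?F q) \<le> of_nat (card {1..Q}) * (2 * T * (2 * T * real (Q * j) + 4 * real M * harm M) * S)"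
    by (rule sum_bounded_above)
  then show ?thesis unfolding S_def by (simp add: mult.assoc)
qed

lemma large_sieve_factor_le:
  fixes Q R M N T j h P :: real
  assumes "0 \<le> Q" "Q \<le> R" "0 \<le> M" "M \<le> N" "0 \<le> T" "0 \<le> j" "0 \<le> h" "h \<le> P" "1 \<le> P"
  shows "Q * (2 * T * (2 * T * (Q * j) + 4 * M * h)) \<le> 8 * P * (R * N * T + j * R^2 * T^2)"
proof -
  have "j * Q^2 * T^2 \<le> j * R^2 * T^2"
    using assms by (intro mult_right_mono mult_left_mono power_mono) auto
  then have "4 * (j * Q^2 * T^2) \<le> 8 * P * (j * R^2 * T^2)"
    using assms by (intro mult_mono) auto
  moreover have "Q * M * T * h \<le> R * N * T * P"
    using assms by (intro mult_mono) auto
  ultimately show ?thesis by (simp add: algebra_simps power2_eq_square)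
qed

lemma sum_moduli_nonprincipal_chars_sq_integral_le:
  fixes R T N \<sigma> \<epsilon> :: real and j :: nat and a :: "nat \<Rightarrow> complex"
  assumes "\<epsilon> > 0" "T \<ge> 3" "R \<ge> 1" "N \<ge> 1" "j \<ge> 1"
  shows "(\<Sum>q\<in>{1..nat \<lfloor>R\<rfloor>}. \<Sum>chi\<in>{chi. dirichlet_char (q * j) chi \<and> chi \<noteq> principal_char (q * j)}.
       (integral {-T..T} (\<lambda>t. norm (\<Sum>n\<in>{1..nat \<lfloor>N\<rfloor>}.
          a n * chi n / (of_nat n) powr (complex_of_real \<sigma> + \<i> * complex_of_real t)))) ^ 2)
    \<le> 8 * (1 + 1 / \<epsilon>) * (real j * R * N * T) powr \<epsilon> * (R * N * T + real j * R^2 * T^2) *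
       (\<Sum>n\<in>{1..nat \<lfloor>N\<rfloor>}. (norm (a n))^2 / (real n) powr (2 * \<sigma>))"
    (is "?L \<le> _ * ?S")
proof -
  define x where "x = real j * R * N * T"
  define P where "P = (1 + 1 / \<epsilon>) * x powr \<epsilon>"
  have "1 * N \<le> (real j * R * T) * N"
    using assms by (intro mult_right_mono mult_ge1_I) auto
  then have "N \<le> x" unfolding x_def by (simp add: mult_ac)
  moreover have "real (nat \<lfloor>N\<rfloor>) \<le> N" "real (nat \<lfloor>R\<rfloor>) \<le> R" using assms by linarith+
  ultimately have "harm (nat \<lfloor>N\<rfloor>) \<le> P"
    unfolding P_def using assms by (intro harm_le_powr) linarith+
  moreover have "1 \<le> P"
    unfolding P_def using assms \<open>N \<le> x\<close> by (intro mult_ge1_I) (auto simp: ge_one_powr_ge_zero)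
  ultimately have factor: "real (nat \<lfloor>R\<rfloor>) * (2 * T * (2 * T * real (nat \<lfloor>R\<rfloor> * j) +
      4 * real (nat \<lfloor>N\<rfloor>) * harm (nat \<lfloor>N\<rfloor>))) \<le> 8 * P * (R * N * T + real j * R^2 * T^2)"
    using assms \<open>real (nat \<lfloor>N\<rfloor>) \<le> N\<close> \<open>real (nat \<lfloor>R\<rfloor>) \<le> R\<close>
    unfolding of_nat_mult by (intro large_sieve_factor_le) (auto simp: harm_nonneg)
  have "?S \<ge> 0" by (intro sum_nonneg) auto
  have "?L \<le> real (nat \<lfloor>R\<rfloor>) * (2 * T * (2 * T * real (nat \<lfloor>R\<rfloor> * j) +
      4 * real (nat \<lfloor>N\<rfloor>) * harm (nat \<lfloor>N\<rfloor>))) * ?S"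
    using assms by (intro sum_moduli_chars_sq_integral_dirichlet_poly_le) auto
  also have "\<dots> \<le> 8 * P * (R * N * T + real j * R^2 * T^2) * ?S"
    using factor \<open>?S \<ge> 0\<close> by (rule mult_right_mono)
  finally show ?thesis unfolding P_def x_def by (simp only: mult_ac)
qed

theorem mainTheorem11:
  assumes "\<epsilon> > (0::real)"
  shows "\<exists>C::real. \<forall>(R::real) (T::real) (N::real) (\<sigma>::real) (j::nat) (a::nat \<Rightarrow> complex).
    T \<ge> 3 \<and> R \<ge> 1 \<and> N \<ge> 1 \<and> \<sigma> \<ge> 1/2 \<and> j \<ge> 1 \<longrightarrow>
    (\<Sum>q\<in>{1..nat \<lfloor>R\<rfloor>}. \<Sum>chi\<in>{chi. dirichlet_char (q * j) chi \<and> chi \<noteq> principal_char (q * j)}.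
       (integral {-T..T} (\<lambda>t. norm (\<Sum>n\<in>{1..nat \<lfloor>N\<rfloor>}.
          a n * chi n / (of_nat n) powr (complex_of_real \<sigma> + \<i> * complex_of_real t)))) ^ 2)
    \<le> C * (real j * R * N * T) powr \<epsilon> * (R * N * T + real j * R^2 * T^2) *
       (\<Sum>n\<in>{1..nat \<lfloor>N\<rfloor>}. (norm (a n))^2 / (real n) powr (2 * \<sigma>))"
  by (intro exI[of _ "8 * (1 + 1 / \<epsilon>)"] allI impI
      sum_moduli_nonprincipal_chars_sq_integral_le[OF assms]) simp_all

end
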